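(* Let $M$ have constant sectional curvature $c\in\mathbb{R}$ and let $b_0,b_1,b_2,b_3\in\mathbb{R}$ be constants with $b_0b_2-b_1^2-b_3^2=-1$ (equivalently $\omega\wedge\omega=(d\theta)^2$), where $\omega=b_0\alpha_0+b_1\alpha_1+b_2\alpha_2+b_3\,d\theta$. Then the 3-form $\varphi=\theta\wedge\omega$ on $T^1M$ is a calibration if and only if $$b_0+b_2=0,\qquad b_0^2+b_1^2=1,\qquad b_3=0.$$
   Context: Let $(M,g)$ be an oriented Riemannian 3-manifold with Levi-Civita connection $\nabla$ and unit tangent sphere bundle $\pi:T^1M\to M$, endowed with (the restriction of) the Sasaki metric $g^S$: the metric on $TM$ for which the splitting $T(TM)=H^\nabla\oplus V$ into the $\nabla$-horizontal and vertical subspaces is orthogonal and both $d\pi|_{H^\nabla}$ and the canonical identification of $V$ with $T_{\pi(u)}M$ are isometries. Let $B$ be the mirror map on $T(TM)$ sending the horizontal lift of a vector to its vertical lift and vertical vectors to $0$. An adapted orthonormal frame at $u\in T^1M$ is $e_0,\dots,e_4$, where $e_0$ is the geodesic spray (the horizontal lift of $u$), $e_1,e_2$ are horizontal lifts of an orthonormal basis of $u^\perp\subset T_{\pi(u)}M$ with $(u,d\pi e_1,d\pi e_2)$ positively oriented, $e_3=Be_1$, $e_4=Be_2$; $T^1M$ is oriented by $e^0\wedge\cdots\wedge e^4$. With $e^0,\dots,e^4$ the dual coframe and $e^{ij}=e^i\wedge e^j$, set $\theta=e^0$ and the globally defined 2-forms $\alpha_0=e^{12}$, $\alpha_1=e^{14}-e^{23}$,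 $\alpha_2=e^{34}$; then $d\theta=e^{31}+e^{42}$. If $M$ has constant sectional curvature $c$, then $d\alpha_0=\theta\wedge\alpha_1$, $d\alpha_1=2\theta\wedge\alpha_2-2c\,\theta\wedge\alpha_0$, $d\alpha_2=-c\,\theta\wedge\alpha_1$. A calibration is a closed differential form of comass one, i.e. its value on every unit simple $k$-vector is at most $1$, with the value $1$ attained (at least as a supremum) at every point. *)

theory Defs
  imports "HOL-Analysis.Analysis"
begin

text \<open>At a point u of T^1M the tangent space is identified with
  real^5 via the adapted orthonormal frame e_0,...,e_4 (Sasaki metric = Euclidean inner
  product in these coordinates); the dual coframe is e^i(v) = v$i.  All forms below have
  constant coefficients in adapted coframes, so their values are the same at every point.
  k-forms are represented as alternating multilinear functions of k tangent vectors, with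
  the determinant normalization (e^i wedge e^j)(u,v) = u_i v_j - u_j v_i.\<close>

type_synonym tvec = "real^5"
type_synonym form1 = "tvec \<Rightarrow> real"
type_synonym form2 = "tvec \<Rightarrow> tvec \<Rightarrow> real"
type_synonym form3 = "tvec \<Rightarrow> tvec \<Rightarrow> tvec \<Rightarrow> real"
type_synonym form4 = "tvec \<Rightarrow> tvec \<Rightarrow> tvec \<Rightarrow> tvec \<Rightarrow> real"

definition cof :: "5 \<Rightarrow> form1" where "cof i v = v $ i"

definition e2 :: "5 \<Rightarrow> 5 \<Rightarrow> form2" where
  "e2 i j u v = u $ i * v $ j - u $ j * v $ i"

definition wedge11 :: "form1 \<Rightarrow> form1 \<Rightarrow> form2" where
  "wedge11 a b u v = a u * b v - a v * b u"

definition wedge12 :: "form1 \<Rightarrow> form2 \<Rightarrow> form3" where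
  "wedge12 a B u v w = a u * B v w - a v * B u w + a w * B u v"

definition wedge13 :: "form1 \<Rightarrow> form3 \<Rightarrow> form4" where
  "wedge13 a X u1 u2 u3 u4 =
     a u1 * X u2 u3 u4 - a u2 * X u1 u3 u4 + a u3 * X u1 u2 u4 - a u4 * X u1 u2 u3"

definition wedge22 :: "form2 \<Rightarrow> form2 \<Rightarrow> form4" where
  "wedge22 B C u1 u2 u3 u4 =
       B u1 u2 * C u3 u4 - B u1 u3 * C u2 u4 + B u1 u4 * C u2 u3
     + B u2 u3 * C u1 u4 - B u2 u4 * C u1 u3 + B u3 u4 * C u1 u2"

definition add2 :: "form2 \<Rightarrow> form2 \<Rightarrow> form2" where "add2 B C u v = B u v + C u v"
definition scal2 :: "real \<Rightarrow> form2 \<Rightarrow> form2" where "scal2 r B u v = r * B u v"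
definition sub4 :: "form4 \<Rightarrow> form4 \<Rightarrow> form4" where
  "sub4 X Y u1 u2 u3 u4 = X u1 u2 u3 u4 - Y u1 u2 u3 u4"

definition theta :: form1 where "theta = cof 0"
definition dtheta :: form2 where "dtheta = add2 (e2 3 1) (e2 4 2)"
definition alpha0 :: form2 where "alpha0 = e2 1 2"
definition alpha1 :: form2 where "alpha1 = add2 (e2 1 4) (scal2 (-1) (e2 2 3))"
definition alpha2 :: form2 where "alpha2 = e2 3 4"

definition omega :: "real \<Rightarrow> real \<Rightarrow> real \<Rightarrow> real \<Rightarrow> form2" where
  "omega b0 b1 b2 b3 =
     add2 (add2 (scal2 b0 alpha0) (scal2 b1 alpha1)) (add2 (scal2 b2 alpha2) (scal2 b3 dtheta))"

definition phi :: "real \<Rightarrow> real \<Rightarrow> real \<Rightarrow> real \<Rightarrow> form3" where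
  "phi b0 b1 b2 b3 = wedge12 theta (omega b0 b1 b2 b3)"

text \<open>Exterior derivatives for constant curvature c, from the structure equations
  d alpha_0 = theta ^ alpha_1, d alpha_1 = 2 theta ^ alpha_2 - 2c theta ^ alpha_0,
  d alpha_2 = -c theta ^ alpha_1, d(d theta) = 0, extended by linearity (constant
  coefficients) and the Leibniz rule d(theta ^ omega) = d theta ^ omega - theta ^ d omega.\<close>
definition domega :: "real \<Rightarrow> real \<Rightarrow> real \<Rightarrow> real \<Rightarrow> real \<Rightarrow> form3" where
  "domega c b0 b1 b2 b3 = wedge12 theta
     (add2 (add2 (scal2 b0 alpha1) (scal2 b1 (add2 (scal2 2 alpha2) (scal2 (-2*c) alpha0))))
           (scal2 b2 (scal2 (-c) alpha1)))"

definition dphi :: "real \<Rightarrow> real \<Rightarrow> real \<Rightarrow> real \<Rightarrow> real \<Rightarrow> form4" where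
  "dphi c b0 b1 b2 b3 =
     sub4 (wedge22 dtheta (omega b0 b1 b2 b3)) (wedge13 theta (domega c b0 b1 b2 b3))"

text \<open>Squared norm of the simple 3-vector u^v^w: the Gram determinant.\<close>
definition gram3 :: "tvec \<Rightarrow> tvec \<Rightarrow> tvec \<Rightarrow> real" where
  "gram3 u v w =
     (u\<bullet>u) * ((v\<bullet>v) * (w\<bullet>w) - (v\<bullet>w) * (w\<bullet>v))
   - (u\<bullet>v) * ((v\<bullet>u) * (w\<bullet>w) - (v\<bullet>w) * (w\<bullet>u))
   + (u\<bullet>w) * ((v\<bullet>u) * (w\<bullet>v) - (v\<bullet>v) * (w\<bullet>u))"

definition is_calibration3 :: "form3 \<Rightarrow> form4 \<Rightarrow> bool" where
  "is_calibration3 f df \<longleftrightarrow>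
     (\<forall>u1 u2 u3 u4. df u1 u2 u3 u4 = 0) \<and>
     (\<forall>u v w. gram3 u v w = 1 \<longrightarrow> f u v w \<le> 1) \<and>
     (\<forall>\<epsilon>>0. \<exists>u v w. gram3 u v w = 1 \<and> f u v w > 1 - \<epsilon>)"

end

theory Submission
  imports Defs
begin

text \<open>Since d theta wedge alpha_i = 0 and theta wedge d omega = 0, the derivative d phi reduces
  to b3 (d theta)^2, so phi is closed exactly when b3 = 0.  On a simple 3-vector
  u wedge v wedge w, phi is a linear combination of Pluecker coordinates, and by
  Cauchy-Binet the squared norm is the sum of the squares of all ten of them.  For
  b2 = -b0, b0^2 + b1^2 = 1 and b3 = 0, the quadratic Pluecker relation among the coordinates
  containing the index 0 turns |u wedge v wedge w|^2 - phi(u,v,w)^2 into a sum of squares, so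
  the comass is at most 1, with equality on e0 wedge e1 wedge (b0 e2 + b1 e4).  Conversely,
  testing phi on e0 wedge e1 wedge (a e2 + b e4) and e0 wedge e3 wedge (a e2 + b e4) gives
  b0^2 + b1^2 \<le> 1 and b1^2 + b2^2 \<le> 1, which together with b0 b2 - b1^2 = -1 force
  (b0 + b2)^2 \<le> 0.\<close>

definition plucker :: "tvec \<Rightarrow> tvec \<Rightarrow> tvec \<Rightarrow> 5 \<Rightarrow> 5 \<Rightarrow> 5 \<Rightarrow> real" where
  "plucker u v w i j k =
     u$i * (v$j * w$k - v$k * w$j) - u$j * (v$i * w$k - v$k * w$i) + u$k * (v$i * w$j - v$j * w$i)"

lemma UNIV_5: "(UNIV :: 5 set) = {0, 1, 2, 3, 4}"
proof -
  have "x \<in> {0, 1, 2, 3, 4}" for x :: 5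
  proof (induct x)
    case (of_int z)
    then have "z = 0 \<or> z = 1 \<or> z = 2 \<or> z = 3 \<or> z = 4" by fastforce
    then show ?case by auto
  qed
  then show ?thesis by blast
qed

lemma sum_UNIV_5: "sum f (UNIV :: 5 set) = f 0 + f 1 + f 2 + f 3 + f 4"
  unfolding UNIV_5 by (simp add: ac_simps)

lemma gram3_eq_sum_plucker_squares:
  "gram3 u v w =
     (plucker u v w 0 1 2)\<^sup>2 + (plucker u v w 0 1 3)\<^sup>2 + (plucker u v w 0 1 4)\<^sup>2
   + (plucker u v w 0 2 3)\<^sup>2 + (plucker u v w 0 2 4)\<^sup>2 + (plucker u v w 0 3 4)\<^sup>2
   + (plucker u v w 1 2 3)\<^sup>2 + (plucker u v w 1 2 4)\<^sup>2 + (plucker u v w 1 3 4)\<^sup>2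
   + (plucker u v w 2 3 4)\<^sup>2"
  unfolding gram3_def plucker_def inner_vec_def sum_UNIV_5 inner_real_def
  by algebra

lemma plucker_relation:
  "plucker u v w 0 1 2 * plucker u v w 0 3 4 - plucker u v w 0 1 3 * plucker u v w 0 2 4
   + plucker u v w 0 1 4 * plucker u v w 0 2 3 = 0"
  unfolding plucker_def by algebra

lemma phi_eq_plucker:
  "phi b0 b1 b2 b3 u v w =
     b0 * plucker u v w 0 1 2 + b1 * (plucker u v w 0 1 4 - plucker u v w 0 2 3)
   + b2 * plucker u v w 0 3 4 + b3 * (plucker u v w 0 3 1 + plucker u v w 0 4 2)"
  unfolding phi_def wedge12_def omega_def add2_def scal2_def alpha0_def alpha1_def alpha2_def
    dtheta_def e2_def theta_def cof_def plucker_def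
  by (simp add: algebra_simps)

lemma dphi_eq_wedge_dtheta_dtheta:
  "dphi c b0 b1 b2 b3 u1 u2 u3 u4 = b3 * wedge22 dtheta dtheta u1 u2 u3 u4"
  unfolding dphi_def sub4_def wedge22_def wedge13_def domega_def wedge12_def omega_def add2_def
    scal2_def alpha0_def alpha1_def alpha2_def dtheta_def e2_def theta_def cof_def
  by (simp add: algebra_simps)

lemma dphi_eq_zero_iff: "(\<forall>u1 u2 u3 u4. dphi c b0 b1 b2 b3 u1 u2 u3 u4 = 0) \<longleftrightarrow> b3 = 0"
proof
  assume "\<forall>u1 u2 u3 u4. dphi c b0 b1 b2 b3 u1 u2 u3 u4 = 0"
  moreover have "wedge22 dtheta dtheta (axis 3 1) (axis 1 1) (axis 4 1) (axis 2 1) = 2"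
    by (simp add: wedge22_def dtheta_def add2_def e2_def axis_def)
  ultimately show "b3 = 0"
    unfolding dphi_eq_wedge_dtheta_dtheta by (metis mult_eq_0_iff zero_neq_numeral)
qed (simp add: dphi_eq_wedge_dtheta_dtheta)

lemma phi_sq_le_gram3:
  assumes "b0\<^sup>2 + b1\<^sup>2 = 1"
  shows "(phi b0 b1 (-b0) 0 u v w)\<^sup>2 \<le> gram3 u v w"
proof -
  define P where "P = plucker u v w"
  have "gram3 u v w - (phi b0 b1 (-b0) 0 u v w)\<^sup>2 =
          (b1 * (P 0 1 2 - P 0 3 4) - b0 * (P 0 1 4 - P 0 2 3))\<^sup>2 + (P 0 1 3 + P 0 2 4)\<^sup>2
        + (P 1 2 3)\<^sup>2 + (P 1 2 4)\<^sup>2 + (P 1 3 4)\<^sup>2 + (P 2 3 4)\<^sup>2"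
    using assms plucker_relation[of u v w]
    unfolding gram3_eq_sum_plucker_squares phi_eq_plucker P_def by algebra
  then show ?thesis
    by (smt (verit) zero_le_power2)
qed

lemma phi_on_e0_e1:
  "phi b0 b1 b2 b3 (axis 0 1) (axis 1 1) (axis 2 a + axis 4 b) = b0 * a + b1 * b"
  by (simp add: phi_eq_plucker plucker_def axis_def)

lemma phi_on_e0_e3:
  "phi b0 b1 b2 b3 (axis 0 1) (axis 3 1) (axis 2 a + axis 4 b) = b1 * a + b2 * b"
  by (simp add: phi_eq_plucker plucker_def axis_def)

lemma gram3_on_e0_ej:
  assumes "j = 1 \<or> j = 3"
  shows "gram3 (axis 0 1) (axis j 1) (axis 2 a + axis 4 b) = a\<^sup>2 + b\<^sup>2"
  using assms by (auto simp: gram3_eq_sum_plucker_squares plucker_def axis_def)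

lemma sum_squares_le_one_of_dual_bound:
  fixes p q :: real
  assumes "\<And>a b. a\<^sup>2 + b\<^sup>2 = 1 \<Longrightarrow> p * a + q * b \<le> 1"
  shows "p\<^sup>2 + q\<^sup>2 \<le> 1"
proof (cases "p\<^sup>2 + q\<^sup>2 = 0")
  case False
  define r where "r = sqrt (p\<^sup>2 + q\<^sup>2)"
  have "p\<^sup>2 + q\<^sup>2 > 0"
    using False by (simp add: add_nonneg_nonneg order_less_le)
  then have r: "r > 0" "r\<^sup>2 = p\<^sup>2 + q\<^sup>2"
    by (simp_all add: r_def)
  have "(p / r)\<^sup>2 + (q / r)\<^sup>2 = (p\<^sup>2 + q\<^sup>2) / r\<^sup>2"
    by (simp add: power_divide add_divide_distrib)
  also have "\<dots> = 1"
    using r(1) by (simp add: r(2)[symmetric])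
  finally have "(p / r)\<^sup>2 + (q / r)\<^sup>2 = 1" .
  then have "p * (p / r) + q * (q / r) \<le> 1" by (rule assms)
  moreover have "p * (p / r) + q * (q / r) = r"
    using r by (simp add: power2_eq_square field_simps)
  ultimately have "r \<le> 1" by simp
  then show ?thesis
    using r by (metis less_imp_le power_le_one)
qed simp

theorem proposition2p1:
  fixes c b0 b1 b2 b3 :: real
  assumes "b0 * b2 - b1 ^ 2 - b3 ^ 2 = -1"
  shows "is_calibration3 (phi b0 b1 b2 b3) (dphi c b0 b1 b2 b3) \<longleftrightarrow>
         (b0 + b2 = 0 \<and> b0 ^ 2 + b1 ^ 2 = 1 \<and> b3 = 0)"
proof
  assume cal: "is_calibration3 (phi b0 b1 b2 b3) (dphi c b0 b1 b2 b3)"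
  then have b3: "b3 = 0" unfolding is_calibration3_def dphi_eq_zero_iff by blast
  from cal have comass: "\<And>u v w. gram3 u v w = 1 \<Longrightarrow> phi b0 b1 b2 b3 u v w \<le> 1"
    unfolding is_calibration3_def by blast
  have "b0\<^sup>2 + b1\<^sup>2 \<le> 1"
    by (rule sum_squares_le_one_of_dual_bound)
      (metis comass phi_on_e0_e1 gram3_on_e0_ej)
  moreover have "b1\<^sup>2 + b2\<^sup>2 \<le> 1"
    by (rule sum_squares_le_one_of_dual_bound)
      (metis comass phi_on_e0_e3 gram3_on_e0_ej)
  ultimately have "(b0 + b2)\<^sup>2 \<le> 0"
    using assms b3 by (simp add: power2_eq_square algebra_simps)
  then have "b2 = -b0" by simp
  then show "b0 + b2 = 0 \<and> b0 ^ 2 + b1 ^ 2 = 1 \<and> b3 = 0"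
    using assms b3 by (simp add: power2_eq_square)
next
  assume "b0 + b2 = 0 \<and> b0 ^ 2 + b1 ^ 2 = 1 \<and> b3 = 0"
  then have b2: "b2 = -b0" and norm: "b0\<^sup>2 + b1\<^sup>2 = 1" and b3: "b3 = 0" by auto
  have "phi b0 b1 (-b0) 0 u v w \<le> 1" if "gram3 u v w = 1" for u v w
    using phi_sq_le_gram3[OF norm, of u v w] that by (simp add: abs_square_le_1)
  moreover have "gram3 (axis 0 1) (axis 1 1) (axis 2 b0 + axis 4 b1) = 1"
    and "phi b0 b1 (-b0) 0 (axis 0 1) (axis 1 1) (axis 2 b0 + axis 4 b1) = 1"
    using norm by (simp_all add: gram3_on_e0_ej phi_on_e0_e1 power2_eq_square)
  ultimately show "is_calibration3 (phi b0 b1 b2 b3) (dphi c b0 b1 b2 b3)"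
    unfolding is_calibration3_def dphi_eq_zero_iff b2 b3 by force
qed

end
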